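(* Let $k\ge2$. For all $f:\Xi_k\to\mathbb R$, $\mathcal S_k\widehat{\mathcal L}_k(f\circ\Phi_k)=(L_kf)\circ\Phi_k$.
   Context: $V$ is a finite set with symmetric non-negative weights $c_{xy}=c_{yx}\ge0$, $\alpha=(\alpha_x)$ positive. $\Xi_k:=\{\eta\in\mathbb N_0^V:\sum_x\eta_x=k\}$, $\Phi_k(\mathbf x)=\sum_{i=1}^k\delta_{x_i}$ for $\mathbf x\in V^k$. $\mathcal S_k\varphi(\mathbf x)=\frac1{k!}\sum_{\sigma\in S_k}\varphi(x_{\sigma(1)},\dots,x_{\sigma(k)})$. $\widehat{\mathcal L}_k\varphi(\mathbf x)=\sum_{x,y}c_{xy}\sum_{i=1}^k\delta_{x,x_i}(\alpha_y+2\sum_{j=1}^{i-1}\delta_{y,x_j})(\varphi(\mathbf x_i^y)-\varphi(\mathbf x))$, with $\mathbf x_i^y$ being $\mathbf x$ with $i$-th coordinate replaced by $y$. $L_kf(\eta)=\sum_x\eta_x\sum_yc_{xy}(\alpha_y+\eta_y)(f(\eta-\delta_x+\delta_y)-f(\eta))$, where $\eta-\delta_x+\delta_y$ moves one particle from $x$ to $y$. *)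

theory Defs
  imports Complex_Main "HOL-Combinatorics.Permutations"
begin

text \<open>Particle configurations are functions eta :: 'v => nat; points of V^k are
lists of length k (index i of the paper corresponds to list index i-1).\<close>

definition Xi :: "nat \<Rightarrow> ('v::finite \<Rightarrow> nat) set" where
  "Xi k = {eta. (\<Sum>x\<in>UNIV. eta x) = k}"

definition Phi :: "nat \<Rightarrow> 'v list \<Rightarrow> ('v \<Rightarrow> nat)" where
  "Phi k xs = (\<lambda>z. \<Sum>i<k. if xs ! i = z then 1 else 0)"

definition Sym :: "nat \<Rightarrow> ('v list \<Rightarrow> real) \<Rightarrow> 'v list \<Rightarrow> real" where
  "Sym k \<phi> xs = (1 / fact k) *
     (\<Sum>\<sigma>\<in>{\<sigma>. \<sigma> permutes {..<k}}. \<phi> (map (\<lambda>i. xs ! \<sigma> i) [0..<k]))"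

definition Lhat :: "('v::finite \<Rightarrow> 'v \<Rightarrow> real) \<Rightarrow> ('v \<Rightarrow> real) \<Rightarrow> nat
    \<Rightarrow> ('v list \<Rightarrow> real) \<Rightarrow> 'v list \<Rightarrow> real" where
  "Lhat c \<alpha> k \<phi> xs = (\<Sum>x\<in>UNIV. \<Sum>y\<in>UNIV. c x y *
     (\<Sum>i<k. (if x = xs ! i then 1 else 0) *
        (\<alpha> y + 2 * (\<Sum>j<i. if y = xs ! j then 1 else 0)) *
        (\<phi> (xs[i := y]) - \<phi> xs)))"

definition move :: "('v \<Rightarrow> nat) \<Rightarrow> 'v \<Rightarrow> 'v \<Rightarrow> ('v \<Rightarrow> nat)" where
  "move eta x y = (\<lambda>z. eta z - (if z = x then 1 else 0) + (if z = y then 1 else 0))"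

definition Lk :: "('v::finite \<Rightarrow> 'v \<Rightarrow> real) \<Rightarrow> ('v \<Rightarrow> real)
    \<Rightarrow> (('v \<Rightarrow> nat) \<Rightarrow> real) \<Rightarrow> ('v \<Rightarrow> nat) \<Rightarrow> real" where
  "Lk c \<alpha> f eta = (\<Sum>x\<in>UNIV. real (eta x) * (\<Sum>y\<in>UNIV. c x y * (\<alpha> y + real (eta y)) *
       (f (move eta x y) - f eta)))"

end

theory Submission
  imports Defs
begin

text \<open>Both sides depend on the particles only through the configuration \<open>\<eta> = \<Phi>\<^sub>k x\<close>, which is
invariant under permutations, and moving the \<open>i\<close>-th particle from \<open>x\<close> to \<open>y\<close> turns \<open>\<eta>\<close> into
\<open>\<eta> - \<delta>\<^sub>x + \<delta>\<^sub>y\<close>. Summed over \<open>i\<close>, the extra weight \<open>2 #{j < i. x\<^sub>j = y}\<close> of such jumps counts twice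
the pairs \<open>j < i\<close> with \<open>x\<^sub>j = y\<close> and \<open>x\<^sub>i = x\<close>. Reversing the list exchanges these with the pairs
with \<open>x\<^sub>j = x\<close> and \<open>x\<^sub>i = y\<close> and induces a bijection of the symmetric group, so for \<open>x \<noteq> y\<close>
twice their number, averaged over all orderings, is \<open>\<eta>\<^sub>x \<eta>\<^sub>y\<close>; jumps with \<open>x = y\<close> leave \<open>\<eta>\<close> unchanged.
Symmetrisation therefore turns the rate \<open>\<alpha>\<^sub>y \<eta>\<^sub>x + 2 #{\<dots>}\<close> into \<open>\<eta>\<^sub>x (\<alpha>\<^sub>y + \<eta>\<^sub>y)\<close>.\<close>

lemma sum_indicator_nth_eq_count_list:
  "(\<Sum>i<length xs. if xs ! i = a then 1 else 0) = (of_nat (count_list xs a) :: 'r::semiring_1)"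
  by (induction xs) (simp_all add: sum.lessThan_Suc_shift del: sum.lessThan_Suc)

lemma Phi_eq_count_list: "length xs = k \<Longrightarrow> Phi k xs = count_list xs"
  unfolding Phi_def by (auto simp: sum_indicator_nth_eq_count_list)

lemma count_list_permute_list:
  assumes "\<sigma> permutes {..<length xs}"
  shows "count_list (permute_list \<sigma> xs) = count_list xs"
proof -
  have "mset (permute_list \<sigma> xs) = mset xs"
    using assms by simp
  then show ?thesis
    by (simp add: fun_eq_iff flip: count_mset)
qed

lemma Phi_permute_list:
  assumes "\<sigma> permutes {..<k}" "length xs = k"
  shows "Phi k (permute_list \<sigma> xs) = Phi k xs"
  using assms by (simp add: Phi_eq_count_list count_list_permute_list)

lemma Phi_list_update:
  assumes "i < k" "length xs = k"
  shows "Phi k (xs[i := y]) = move (Phi k xs) (xs ! i) y"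
proof -
  have "mset (xs[i := y]) = add_mset y (mset xs - {#xs ! i#})"
    using assms by (simp add: mset_update)
  moreover have "count (mset xs) (xs ! i) > 0"
    using assms by simp
  ultimately show ?thesis
    using assms by (simp add: Phi_eq_count_list move_def fun_eq_iff flip: count_mset)
qed

fun count_pairs :: "'a list \<Rightarrow> 'a \<Rightarrow> 'a \<Rightarrow> nat" where
  "count_pairs [] a b = 0"
| "count_pairs (z # zs) a b = (if z = a then count_list zs b else 0) + count_pairs zs a b"

lemma count_pairs_snoc:
  "count_pairs (xs @ [z]) a b = count_pairs xs a b + (if z = b then count_list xs a else 0)"
  by (induction xs) auto

lemma count_pairs_add_count_pairs_rev:
  "a \<noteq> b \<Longrightarrow> count_pairs xs a b + count_pairs (rev xs) a b = count_list xs a * count_list xs b"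
  by (induction xs) (auto simp: count_pairs_snoc)

lemma count_pairs_eq_0: "b \<notin> set xs \<Longrightarrow> count_pairs xs a b = 0"
  by (induction xs) (auto simp: count_list_0_iff)

lemma sum_indicator_pairs_eq_count_pairs:
  "(\<Sum>i<length xs. (if b = xs ! i then 1 else 0) * (\<Sum>j<i. if a = xs ! j then 1 else 0))
     = (of_nat (count_pairs xs a b) :: 'r::comm_semiring_1)"
proof (induction xs)
  case Nil
  then show ?case by simp
next
  case (Cons z zs)
  have "(\<Sum>i<length (z # zs). (if b = (z # zs) ! i then 1 else 0) *
            (\<Sum>j<i. if a = (z # zs) ! j then 1 else 0))
      = (\<Sum>i<length zs. (if b = zs ! i then 1 else 0) *
            ((if a = z then 1 else 0) + (\<Sum>j<i. if a = zs ! j then 1 else 0)) :: 'r)"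
    by (simp only: length_Cons sum.lessThan_Suc_shift nth_Cons_0 nth_Cons_Suc) simp
  also have "\<dots> = (if a = z then 1 else 0) * (\<Sum>i<length zs. if zs ! i = b then 1 else 0)
      + (of_nat (count_pairs zs a b) :: 'r)"
    unfolding distrib_left sum.distrib Cons.IH[symmetric]
    by (simp add: sum_distrib_left mult.commute eq_commute)
  finally show ?case
    by (simp add: sum_indicator_nth_eq_count_list)
qed

lemma Lhat_comp_Phi:
  assumes "length xs = k"
  shows "Lhat c \<alpha> k (f \<circ> Phi k) xs = (\<Sum>x\<in>UNIV. \<Sum>y\<in>UNIV. c x y *
     (f (move (Phi k xs) x y) - f (Phi k xs)) *
     (\<alpha> y * real (Phi k xs x) + 2 * real (count_pairs xs y x)))"
  unfolding Lhat_def
proof (intro sum.cong refl)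
  fix x y
  let ?D = "f (move (Phi k xs) x y) - f (Phi k xs)"
  let ?before = "\<lambda>i. \<Sum>j<i. if y = xs ! j then 1 else 0"
  have "(\<Sum>i<k. (if x = xs ! i then 1 else 0) * (\<alpha> y + 2 * ?before i) *
          ((f \<circ> Phi k) (xs[i := y]) - (f \<circ> Phi k) xs))
      = (\<Sum>i<k. ?D * (\<alpha> y * (if xs ! i = x then 1 else 0)
          + 2 * ((if x = xs ! i then 1 else 0) * ?before i)))"
    using Phi_list_update[OF _ assms] by (intro sum.cong) (auto simp: algebra_simps)
  also have "\<dots> = ?D * (\<alpha> y * (\<Sum>i<k. if xs ! i = x then 1 else 0)
          + 2 * (\<Sum>i<k. (if x = xs ! i then 1 else 0) * ?before i))"
    by (simp only: sum.distrib flip: sum_distrib_left)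
  also have "\<dots> = ?D * (\<alpha> y * real (Phi k xs x) + 2 * real (count_pairs xs y x))"
    unfolding assms[symmetric]
    by (simp add: Phi_eq_count_list sum_indicator_nth_eq_count_list sum_indicator_pairs_eq_count_pairs)
  finally show "c x y * (\<Sum>i<k. (if x = xs ! i then 1 else 0) * (\<alpha> y + 2 * ?before i) *
          ((f \<circ> Phi k) (xs[i := y]) - (f \<circ> Phi k) xs))
      = c x y * ?D * (\<alpha> y * real (Phi k xs x) + 2 * real (count_pairs xs y x))"
    by simp
qed

definition rev_perm :: "nat \<Rightarrow> nat \<Rightarrow> nat" where
  "rev_perm k i = (if i < k then k - Suc i else i)"

lemma rev_perm_permutes: "rev_perm k permutes {..<k}"
proof (rule bij_imp_permutes)
  show "bij_betw (rev_perm k) {..<k} {..<k}"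
    by (rule bij_betw_byWitness[where f' = "rev_perm k"]) (auto simp: rev_perm_def)
qed (simp add: rev_perm_def)

lemma permute_list_rev_perm: "length xs = k \<Longrightarrow> permute_list (rev_perm k) xs = rev xs"
  by (auto simp: permute_list_def rev_perm_def rev_nth intro: nth_equalityI)

lemma sum_permutations_rev_permute_list:
  assumes "length xs = k"
  shows "(\<Sum>\<sigma> | \<sigma> permutes {..<k}. g (rev (permute_list \<sigma> xs)))
       = (\<Sum>\<sigma> | \<sigma> permutes {..<k}. g (permute_list \<sigma> xs))"
proof -
  have "rev (permute_list \<sigma> xs) = permute_list (\<sigma> \<circ> rev_perm k) xs" for \<sigma>
    using assms rev_perm_permutes[of k]
    by (simp add: permute_list_compose permute_list_rev_perm)
  then show ?thesis
    using sum_permutations_compose_right[OF rev_perm_permutes,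
        of "\<lambda>\<sigma>. g (permute_list \<sigma> xs)" k]
    by simp
qed

lemma sum_permutations_count_pairs:
  assumes "length xs = k" "a \<noteq> b"
  shows "2 * (\<Sum>\<sigma> | \<sigma> permutes {..<k}. count_pairs (permute_list \<sigma> xs) a b)
       = fact k * count_list xs a * count_list xs b"
proof -
  let ?P = "{\<sigma>. \<sigma> permutes {..<k}}"
  have "2 * (\<Sum>\<sigma>\<in>?P. count_pairs (permute_list \<sigma> xs) a b)
      = (\<Sum>\<sigma>\<in>?P. count_pairs (permute_list \<sigma> xs) a b
                  + count_pairs (rev (permute_list \<sigma> xs)) a b)"
    using sum_permutations_rev_permute_list[OF assms(1), of "\<lambda>ys. count_pairs ys a b"]
    by (simp add: sum.distrib)
  also have "\<dots> = (\<Sum>\<sigma>\<in>?P. count_list xs a * count_list xs b)"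
    using assms
    by (intro sum.cong) (simp_all add: count_pairs_add_count_pairs_rev count_list_permute_list)
  also have "\<dots> = fact k * count_list xs a * count_list xs b"
    by (simp add: card_permutations)
  finally show ?thesis .
qed

lemma move_self: "\<eta> x \<noteq> 0 \<Longrightarrow> move \<eta> x x = \<eta>"
  by (auto simp: move_def fun_eq_iff)

lemma sum_permutations_jump_rate:
  assumes "length xs = k"
  defines "\<eta> \<equiv> Phi k xs"
  shows "(f (move \<eta> x y) - f \<eta>) * (\<Sum>\<sigma> | \<sigma> permutes {..<k}.
           \<alpha> y * real (\<eta> x) + 2 * real (count_pairs (permute_list \<sigma> xs) y x))
       = fact k * real (\<eta> x) * (\<alpha> y + real (\<eta> y)) * (f (move \<eta> x y) - f \<eta>)"
proof -
  let ?P = "{\<sigma>. \<sigma> permutes {..<k}}"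
  have \<eta>: "\<eta> = count_list xs"
    using assms by (simp add: Phi_eq_count_list)
  have sum_rate: "(\<Sum>\<sigma>\<in>?P. \<alpha> y * real (\<eta> x) + 2 * real (count_pairs (permute_list \<sigma> xs) y x))
      = fact k * \<alpha> y * real (\<eta> x) + real (2 * (\<Sum>\<sigma>\<in>?P. count_pairs (permute_list \<sigma> xs) y x))"
    by (simp add: sum.distrib card_permutations sum_distrib_left)
  consider "x \<noteq> y" | "x = y" "\<eta> x \<noteq> 0" | "x = y" "\<eta> x = 0"
    by blast
  then show ?thesis
  proof cases
    case 1
    then show ?thesis
      unfolding sum_rate sum_permutations_count_pairs[OF assms(1) 1[symmetric]]
      by (simp add: \<eta> algebra_simps)
  next
    case 2
    then show ?thesis
      by (simp add: move_self)
  next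
    case 3
    then have "count_pairs (permute_list \<sigma> xs) y x = 0" if "\<sigma> \<in> ?P" for \<sigma>
      using that assms(1) by (intro count_pairs_eq_0) (simp add: \<eta> count_list_0_iff)
    with 3 show ?thesis
      by simp
  qed
qed

theorem propositionA4:
  fixes c :: "'v::finite \<Rightarrow> 'v \<Rightarrow> real" and \<alpha> :: "'v \<Rightarrow> real"
    and k :: nat and f :: "('v \<Rightarrow> nat) \<Rightarrow> real" and xs :: "'v list"
  assumes "\<And>x y. c x y = c y x" and "\<And>x y. c x y \<ge> 0" and "\<And>x. \<alpha> x > 0"
    and "k \<ge> 2" and "length xs = k"
  shows "Sym k (Lhat c \<alpha> k (f \<circ> Phi k)) xs = Lk c \<alpha> f (Phi k xs)"
proof -
  let ?P = "{\<sigma>. \<sigma> permutes {..<k}}"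
  let ?\<eta> = "Phi k xs"
  let ?D = "\<lambda>x y. f (move ?\<eta> x y) - f ?\<eta>"
  let ?rate = "\<lambda>\<sigma> x y. \<alpha> y * real (?\<eta> x) + 2 * real (count_pairs (permute_list \<sigma> xs) y x)"
  have "Sym k (Lhat c \<alpha> k (f \<circ> Phi k)) xs
      = 1 / fact k * (\<Sum>\<sigma>\<in>?P. Lhat c \<alpha> k (f \<circ> Phi k) (permute_list \<sigma> xs))"
    using assms(5) by (simp add: Sym_def permute_list_def)
  also have "\<dots> = 1 / fact k * (\<Sum>\<sigma>\<in>?P. \<Sum>x\<in>UNIV. \<Sum>y\<in>UNIV. c x y * ?D x y * ?rate \<sigma> x y)"
    using assms(5) by (simp add: Lhat_comp_Phi Phi_permute_list)
  also have "\<dots> = 1 / fact k * (\<Sum>x\<in>UNIV. \<Sum>y\<in>UNIV. c x y * (?D x y * (\<Sum>\<sigma>\<in>?P. ?rate \<sigma> x y)))"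
    by (simp add: sum.swap[of _ ?P] sum_distrib_left mult.assoc)
  also have "\<dots> = 1 / fact k * (\<Sum>x\<in>UNIV. \<Sum>y\<in>UNIV.
      c x y * (fact k * real (?\<eta> x) * (\<alpha> y + real (?\<eta> y)) * ?D x y))"
    by (simp only: sum_permutations_jump_rate[OF assms(5)])
  also have "\<dots> = Lk c \<alpha> f ?\<eta>"
    by (simp add: Lk_def sum_distrib_left mult_ac)
  finally show ?thesis .
qed

end
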